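(* Let $D$ be a tournament and $T\subseteq V(D)$. Suppose an arc $e\in A(D)$ is contained in some minimum-size $T$-feedback arc set of $D$, and let $D'$ be the tournament obtained from $D$ by reversing the arc $e$. Then for every arc set $S$ with $e\in S$: $S$ is a minimum $T$-feedback arc set of $D$ if and only if $S\setminus\{e\}$ is a minimum $T$-feedback arc set of $D'$.
   Context: A $T$-cycle is a directed cycle containing at least one vertex of $T$. A $T$-feedback arc set of a digraph $D$ is a set $S\subseteq A(D)$ such that $D-S$ contains no $T$-cycle; it is minimum if it has the smallest possible size. *)

theory Defs
  imports Main
begin

definition tournament :: "'a set \<Rightarrow> ('a \<times> 'a) set \<Rightarrow> bool" where
  "tournament V A \<longleftrightarrow> finite V \<and> A \<subseteq> V \<times> V \<and> (\<forall>v. (v, v) \<notin> A) \<and>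
     (\<forall>u\<in>V. \<forall>v\<in>V. u \<noteq> v \<longrightarrow> ((u, v) \<in> A \<longleftrightarrow> (v, u) \<notin> A))"

definition dir_cycle :: "('a \<times> 'a) set \<Rightarrow> 'a list \<Rightarrow> bool" where
  "dir_cycle A vs \<longleftrightarrow> length vs \<ge> 2 \<and> distinct vs \<and>
     (\<forall>i < length vs. (vs ! i, vs ! ((i + 1) mod length vs)) \<in> A)"

definition T_cycle :: "('a \<times> 'a) set \<Rightarrow> 'a set \<Rightarrow> 'a list \<Rightarrow> bool" where
  "T_cycle A T vs \<longleftrightarrow> dir_cycle A vs \<and> set vs \<inter> T \<noteq> {}"

definition T_fas :: "('a \<times> 'a) set \<Rightarrow> 'a set \<Rightarrow> ('a \<times> 'a) set \<Rightarrow> bool" where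
  "T_fas A T S \<longleftrightarrow> S \<subseteq> A \<and> \<not> (\<exists>vs. T_cycle (A - S) T vs)"

definition min_T_fas :: "('a \<times> 'a) set \<Rightarrow> 'a set \<Rightarrow> ('a \<times> 'a) set \<Rightarrow> bool" where
  "min_T_fas A T S \<longleftrightarrow> T_fas A T S \<and> (\<forall>S'. T_fas A T S' \<longrightarrow> card S \<le> card S')"

definition reverse_arc :: "('a \<times> 'a) set \<Rightarrow> 'a \<times> 'a \<Rightarrow> ('a \<times> 'a) set" where
  "reverse_arc A e = (A - {e}) \<union> {(snd e, fst e)}"

end

theory Submission
  imports Defs
begin

text \<open>If \<open>R \<ni> e = (u, v)\<close> is a minimum \<open>T\<close>-feedback arc set, then \<open>R - {e}\<close> is not one,
  so \<open>(A - R) \<union> {e}\<close> has a \<open>T\<close>-cycle, i.e. \<open>A - R\<close> has walks from \<open>T\<close> to \<open>u\<close> and from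
  \<open>v\<close> to \<open>T\<close>. A \<open>T\<close>-cycle through the reversed arc \<open>(v, u)\<close> would add a walk from \<open>u\<close>
  to \<open>v\<close> in \<open>A - R\<close>, closing a \<open>T\<close>-cycle there. Hence \<open>R - {e}\<close> is a \<open>T\<close>-feedback
  arc set after reversing \<open>e\<close>; conversely any such set \<open>S'\<close> yields the \<open>T\<close>-feedback arc set
  \<open>(S' - {(v, u)}) \<union> {e}\<close> of the original tournament.\<close>

lemma dir_cycle_trancl:
  assumes "dir_cycle B vs" and "w \<in> set vs"
  shows "(w, w) \<in> B\<^sup>+"
proof -
  let ?n = "length vs"
  obtain i where i: "i < ?n" "vs ! i = w" using assms(2) by (meson in_set_conv_nth)
  have "(vs ! i, vs ! ((i + k) mod ?n)) \<in> B\<^sup>+" if "k \<ge> 1" for k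
    using that
  proof (induction k rule: dec_induct)
    case base
    then show ?case using assms(1) i(1) unfolding dir_cycle_def by auto
  next
    case (step k)
    have "(i + k) mod ?n < ?n" using i(1) by (metis mod_less_divisor not_less0 neq0_conv)
    then have "(vs ! ((i + k) mod ?n), vs ! (((i + k) mod ?n + 1) mod ?n)) \<in> B"
      using assms(1) unfolding dir_cycle_def by blast
    moreover have "((i + k) mod ?n + 1) mod ?n = (i + Suc k) mod ?n"
      by (simp add: mod_Suc_eq)
    ultimately show ?case using step.IH by (metis trancl_into_trancl)
  qed
  from this[of ?n] i show ?thesis by simp
qed

lemma trancl_imp_distinct_path:
  assumes "(x, y) \<in> B\<^sup>+"
  shows "\<exists>p. distinct p \<and> p \<noteq> [] \<and> hd p = x \<and>
    (\<forall>i. Suc i < length p \<longrightarrow> (p ! i, p ! Suc i) \<in> B) \<and> (last p, y) \<in> B"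
  using assms
proof (induction rule: trancl_induct)
  case (base y)
  then show ?case by (intro exI[of _ "[x]"]) auto
next
  case (step y z)
  then obtain p where p: "distinct p" "p \<noteq> []" "hd p = x"
    "\<forall>i. Suc i < length p \<longrightarrow> (p ! i, p ! Suc i) \<in> B" "(last p, y) \<in> B" by blast
  show ?case
  proof (cases "y \<in> set p")
    case True
    then obtain j where j: "j < length p" "p ! j = y" by (meson in_set_conv_nth)
    let ?q = "take (Suc j) p"
    have "last ?q = y" using j by (simp add: take_Suc_conv_app_nth)
    moreover have "hd ?q = x" using p(2,3) by (simp add: hd_take)
    moreover have "?q \<noteq> []" using p(2) by simp
    ultimately show ?thesis using p(1,4) step(2) by (intro exI[of _ ?q]) auto
  next
    case False
    let ?q = "p @ [y]"
    have "(?q ! i, ?q ! Suc i) \<in> B" if i: "Suc i < length ?q" for i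
    proof (cases "Suc i < length p")
      case True
      then show ?thesis using p(4) by (simp add: nth_append)
    next
      case False
      then have "i = length p - 1" using i by simp
      then show ?thesis using p(2,5) by (simp add: nth_append last_conv_nth)
    qed
    then show ?thesis using p(1-3) False step(2) by (intro exI[of _ ?q]) auto
  qed
qed

lemma trancl_self_imp_dir_cycle:
  assumes "(w, w) \<in> B\<^sup>+" and "\<forall>x. (x, x) \<notin> B"
  shows "\<exists>vs. dir_cycle B vs \<and> w \<in> set vs"
proof -
  obtain p where p: "distinct p" "p \<noteq> []" "hd p = w"
    "\<forall>i. Suc i < length p \<longrightarrow> (p ! i, p ! Suc i) \<in> B" "(last p, w) \<in> B"
    using trancl_imp_distinct_path[OF assms(1)] by blast
  have "length p \<noteq> 1"
  proof
    assume "length p = 1"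
    then have "last p = w" using p(2,3) by (cases p) auto
    then show False using p(5) assms(2) by auto
  qed
  moreover have "length p \<noteq> 0" using p(2) by simp
  ultimately have len: "length p \<ge> 2" by arith
  have "(p ! i, p ! ((i + 1) mod length p)) \<in> B" if i: "i < length p" for i
  proof (cases "Suc i < length p")
    case True
    then show ?thesis using p(4) by simp
  next
    case False
    then have "i = length p - 1" using i by simp
    then show ?thesis using p(2,3,5) by (simp add: last_conv_nth hd_conv_nth)
  qed
  then have "dir_cycle B p" using p(1) len unfolding dir_cycle_def by blast
  moreover have "w \<in> set p" using p(2,3) by auto
  ultimately show ?thesis by blast
qed

lemma T_cycle_iff_trancl:
  assumes "\<forall>x. (x, x) \<notin> B"
  shows "(\<exists>vs. T_cycle B T vs) \<longleftrightarrow> (\<exists>t\<in>T. (t, t) \<in> B\<^sup>+)"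
proof
  assume "\<exists>vs. T_cycle B T vs"
  then obtain vs t where "dir_cycle B vs" "t \<in> set vs" "t \<in> T"
    unfolding T_cycle_def by auto
  then show "\<exists>t\<in>T. (t, t) \<in> B\<^sup>+" by (auto dest: dir_cycle_trancl)
next
  assume "\<exists>t\<in>T. (t, t) \<in> B\<^sup>+"
  then obtain t where "t \<in> T" "(t, t) \<in> B\<^sup>+" by blast
  then obtain vs where "dir_cycle B vs" "t \<in> set vs"
    using trancl_self_imp_dir_cycle[OF _ assms] by blast
  with \<open>t \<in> T\<close> show "\<exists>vs. T_cycle B T vs" unfolding T_cycle_def by auto
qed

lemma T_fas_iff_trancl:
  assumes "\<forall>x. (x, x) \<notin> A"
  shows "T_fas A T S \<longleftrightarrow> S \<subseteq> A \<and> (\<forall>t\<in>T. (t, t) \<notin> (A - S)\<^sup>+)"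
proof -
  have "\<forall>x. (x, x) \<notin> A - S" using assms by blast
  from T_cycle_iff_trancl[OF this] show ?thesis unfolding T_fas_def by blast
qed

lemma T_cycle_mono: "T_cycle B T vs \<Longrightarrow> B \<subseteq> C \<Longrightarrow> T_cycle C T vs"
  unfolding T_cycle_def dir_cycle_def by blast

lemma T_fas_antimono:
  assumes "T_fas C T S'" and "S \<subseteq> A" and "A - S \<subseteq> C - S'"
  shows "T_fas A T S"
  using assms T_cycle_mono unfolding T_fas_def by blast

lemma trancl_reverse_inserted_arc:
  assumes "u \<noteq> v"
    and no_B: "\<forall>t\<in>T. (t, t) \<notin> B\<^sup>+"
    and uv: "t \<in> T" "(t, t) \<in> (insert (u, v) B)\<^sup>+"
  shows "\<forall>t'\<in>T. (t', t') \<notin> (insert (v, u) B)\<^sup>+"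
proof (intro ballI notI)
  fix t' assume vu: "t' \<in> T" "(t', t') \<in> (insert (v, u) B)\<^sup>+"
  have t_walks: "(t, u) \<in> B\<^sup>*" "(v, t) \<in> B\<^sup>*" using uv no_B unfolding trancl_insert by blast+
  have "(t', v) \<in> B\<^sup>*" "(u, t') \<in> B\<^sup>*" using vu no_B unfolding trancl_insert by blast+
  then have "(u, v) \<in> B\<^sup>+" using \<open>u \<noteq> v\<close> by (meson rtrancl_trans rtranclD)
  then have "(t, t) \<in> B\<^sup>+" using t_walks by (meson rtrancl_trancl_trancl trancl_rtrancl_trancl)
  then show False using no_B uv(1) by blast
qed

lemma T_fas_of_reverse_arc:
  assumes "(u, v) \<in> A" and "(v, u) \<notin> A" and "T_fas (reverse_arc A (u, v)) T S'"
  shows "T_fas A T (insert (u, v) (S' - {(v, u)}))"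
proof (rule T_fas_antimono[OF assms(3)])
  show "insert (u, v) (S' - {(v, u)}) \<subseteq> A"
    using assms unfolding T_fas_def reverse_arc_def by auto
  show "A - insert (u, v) (S' - {(v, u)}) \<subseteq> reverse_arc A (u, v) - S'"
    using assms(2) unfolding reverse_arc_def by auto
qed

lemma T_fas_of_reverse_arc_Diff:
  assumes "e \<in> S" and "S \<subseteq> A" and "T_fas (reverse_arc A e) T (S - {e})"
  shows "T_fas A T S"
  using assms by (intro T_fas_antimono[OF assms(3)]) (auto simp: reverse_arc_def)

lemma min_T_fas_imp_T_fas_reverse_arc:
  assumes "finite A" and loop_free: "\<forall>x. (x, x) \<notin> A" and "(v, u) \<notin> A"
    and R: "min_T_fas A T R" "(u, v) \<in> R"
  shows "T_fas (reverse_arc A (u, v)) T (R - {(u, v)})"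
proof -
  let ?B = "A - R"
  have RA: "R \<subseteq> A" using R(1) unfolding min_T_fas_def T_fas_def by blast
  then have "card (R - {(u, v)}) < card R"
    using R(2) \<open>finite A\<close> by (meson card_Diff1_less finite_subset)
  then have "\<not> T_fas A T (R - {(u, v)})" using R(1) unfolding min_T_fas_def by (meson not_le)
  moreover have "A - (R - {(u, v)}) = insert (u, v) ?B" using RA R(2) by auto
  ultimately obtain t where t: "t \<in> T" "(t, t) \<in> (insert (u, v) ?B)\<^sup>+"
    using RA unfolding T_fas_iff_trancl[OF loop_free] by auto
  have no_B: "\<forall>t\<in>T. (t, t) \<notin> ?B\<^sup>+"
    using R(1) unfolding min_T_fas_def T_fas_iff_trancl[OF loop_free] by blast
  have "u \<noteq> v" using RA R(2) loop_free by blast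
  from trancl_reverse_inserted_arc[OF this no_B t]
  have "\<forall>t'\<in>T. (t', t') \<notin> (insert (v, u) ?B)\<^sup>+" .
  moreover have "reverse_arc A (u, v) - (R - {(u, v)}) = insert (v, u) ?B"
    using RA R(2) \<open>(v, u) \<notin> A\<close> unfolding reverse_arc_def by auto
  moreover have "\<forall>x. (x, x) \<notin> reverse_arc A (u, v)"
    using loop_free \<open>u \<noteq> v\<close> unfolding reverse_arc_def by auto
  moreover have "R - {(u, v)} \<subseteq> reverse_arc A (u, v)"
    using RA unfolding reverse_arc_def by auto
  ultimately show ?thesis using T_fas_iff_trancl by metis
qed

lemma card_insert_Diff_le: "finite X \<Longrightarrow> card (insert x (X - {y})) \<le> Suc (card X)"
  by (simp add: card_insert_if card_Diff1_le le_SucI)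

lemma Suc_card_Diff_singleton:
  "finite A \<Longrightarrow> S \<subseteq> A \<Longrightarrow> x \<in> S \<Longrightarrow> Suc (card (S - {x})) = card S"
  by (rule card_Suc_Diff1) (auto dest: finite_subset)

lemma min_T_fas_reverse_arc_Diff:
  assumes "finite A" and "\<forall>x. (x, x) \<notin> A" and "(v, u) \<notin> A"
    and S: "min_T_fas A T S" "(u, v) \<in> S"
  shows "min_T_fas (reverse_arc A (u, v)) T (S - {(u, v)})"
  unfolding min_T_fas_def
proof (intro conjI allI impI)
  show "T_fas (reverse_arc A (u, v)) T (S - {(u, v)})"
    using min_T_fas_imp_T_fas_reverse_arc[OF assms] .
  fix S' assume S': "T_fas (reverse_arc A (u, v)) T S'"
  have "S \<subseteq> A" using S(1) unfolding min_T_fas_def T_fas_def by blast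
  then have card_S: "Suc (card (S - {(u, v)})) = card S"
    using S(2) Suc_card_Diff_singleton[OF \<open>finite A\<close>] by blast
  have "(u, v) \<in> A" using \<open>S \<subseteq> A\<close> S(2) by blast
  from T_fas_of_reverse_arc[OF this \<open>(v, u) \<notin> A\<close> S']
  have "card S \<le> card (insert (u, v) (S' - {(v, u)}))" using S(1) unfolding min_T_fas_def by blast
  also have "\<dots> \<le> Suc (card S')"
  proof (rule card_insert_Diff_le)
    have "finite (reverse_arc A (u, v))" using \<open>finite A\<close> by (simp add: reverse_arc_def)
    then show "finite S'" using S' unfolding T_fas_def by (blast intro: finite_subset)
  qed
  finally show "card (S - {(u, v)}) \<le> card S'" using card_S by simp
qed

lemma min_T_fas_of_reverse_arc:
  assumes "finite A" and "\<forall>x. (x, x) \<notin> A" and "(v, u) \<notin> A"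
    and S0: "min_T_fas A T S0" "(u, v) \<in> S0"
    and S: "S \<subseteq> A" "(u, v) \<in> S" "min_T_fas (reverse_arc A (u, v)) T (S - {(u, v)})"
  shows "min_T_fas A T S"
  unfolding min_T_fas_def
proof (intro conjI allI impI)
  show "T_fas A T S"
    using T_fas_of_reverse_arc_Diff S unfolding min_T_fas_def by blast
  have "S0 \<subseteq> A" using S0(1) unfolding min_T_fas_def T_fas_def by blast
  then have card_S0: "Suc (card (S0 - {(u, v)})) = card S0"
    using S0(2) Suc_card_Diff_singleton[OF \<open>finite A\<close>] by blast
  have card_S: "Suc (card (S - {(u, v)})) = card S"
    using S(1,2) Suc_card_Diff_singleton[OF \<open>finite A\<close>] by blast
  have "card (S - {(u, v)}) \<le> card (S0 - {(u, v)})"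
    using S(3) min_T_fas_imp_T_fas_reverse_arc[OF assms(1-3) S0] unfolding min_T_fas_def by blast
  then have "card S \<le> card S0" using card_S card_S0 by simp
  also fix S'' assume "T_fas A T S''"
  then have "card S0 \<le> card S''" using S0(1) unfolding min_T_fas_def by blast
  finally show "card S \<le> card S''" .
qed

theorem proposition2:
  fixes V :: "'a set" and A :: "('a \<times> 'a) set" and T :: "'a set"
    and e :: "'a \<times> 'a" and S :: "('a \<times> 'a) set"
  assumes "tournament V A" and "T \<subseteq> V" and "e \<in> A"
    and "\<exists>S0. min_T_fas A T S0 \<and> e \<in> S0"
    and "S \<subseteq> A" and "e \<in> S"
  shows "min_T_fas A T S \<longleftrightarrow> min_T_fas (reverse_arc A e) T (S - {e})"
proof -
  obtain u v where e: "e = (u, v)" by fastforce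
  have "finite A" and "\<forall>x. (x, x) \<notin> A"
    using assms(1) finite_subset[of A "V \<times> V"] unfolding tournament_def by blast+
  moreover have "(v, u) \<notin> A"
  proof -
    have "u \<in> V" "v \<in> V" "u \<noteq> v" using assms(1,3) unfolding tournament_def e by auto
    then show ?thesis using assms(1,3) unfolding tournament_def e by blast
  qed
  ultimately show ?thesis
    using min_T_fas_reverse_arc_Diff[of A v u T S] min_T_fas_of_reverse_arc[of A v u T _ S] assms(4-6)
    unfolding e by blast
qed

end
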